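(* For every $N\ge 1$, the only right Markov code for the one-sided full $N$-shift $(X_{[N]},\sigma_{[N]})$ over $\Sigma_{[N]}=\{1,\dots,N\}$ is the trivial right Markov code $\Sigma_{[N]}$ (the set of all words of length $1$).
   Context: For an $N\times N$ matrix $A$ with entries in $\{0,1\}$, $\Sigma_A=\{1,\dots,N\}$, $X_A$ is the set of sequences $(x_n)_{n\in\mathbb{N}}$ in $\Sigma_A$ with $A(x_n,x_{n+1})=1$ for all $n$, with shift $\sigma_A$; the full $N$-shift is the case where all entries of $A$ equal $1$. $B_k(X_A)$ is the set of admissible words of length $k$, $B_*(X_A)$ the union over $k\ge0$ (including the empty word). For a word $w=w_1\cdots w_\ell$, $\sigma_A(w)=w_2\cdots w_\ell$. A code is a nonempty $\mathcal{C}\subset B_*(X_A)$ such that any equality of concatenations $\omega(i_1)\cdots\omega(i_k)=\omega(j_1)\cdots\omega(j_n)$ of words of $\mathcal{C}$ forces $n=k$ and $\omega(i_m)=\omega(j_m)$ for all $m$; a prefix code is a code in which no word is a prefix of another. A finite prefix code $\mathcal{C}=\{\omega(1),\dots,\omega(M)\}\subset B_*(X_A)$, $\Sigma_{A(\mathcal{C})}=\{1,\dots,M\}$, is a right Markov code for $(X_A,\sigma_A)$ if: (i) for every $\gamma\in B_*(X_A)$ there is $\eta\in B_*(X_A)$ with $\gamma\eta\in B_*(X_A)$ and a unique finite sequence $(i_1,\dots,i_k)$ in $\Sigma_{A(\mathcal{C})}$ with $\gamma\eta=\omega(i_1)\cdots\omega(i_k)$; (ii) there is $L\in\mathbb{N}$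 such that for all $i_1,\dots,i_L$ with $\omega(i_1)\cdots\omega(i_L)\in B_*(X_A)$ there exist $j_1,\dots,j_k\in\Sigma_{A(\mathcal{C})}$ with $\sigma_A(\omega(i_1))\omega(i_2)\cdots\omega(i_L)=\omega(j_1)\cdots\omega(j_k)$; (iii) for every $i,j$ there are $n_1,\dots,n_l$ with $\omega(i)\omega(n_1)\cdots\omega(n_l)\omega(j)\in B_*(X_A)$. *)

theory Defs
  imports Main
begin

text \<open>Alphabet \<Sigma>_A = {1..N}; a 0-1 matrix A is a function nat => nat => nat
  (only its values on {1..N} x {1..N} matter). Words are lists; one-sided
  sequences are functions nat => nat.\<close>

definition XA :: "nat \<Rightarrow> (nat \<Rightarrow> nat \<Rightarrow> nat) \<Rightarrow> (nat \<Rightarrow> nat) set" where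
  "XA N A = {x. (\<forall>n. x n \<in> {1..N}) \<and> (\<forall>n. A (x n) (x (Suc n)) = 1)}"

definition Bstar :: "nat \<Rightarrow> (nat \<Rightarrow> nat \<Rightarrow> nat) \<Rightarrow> nat list set" where
  "Bstar N A = {w. \<exists>x\<in>XA N A. \<exists>n. w = map x [n..<n + length w]}"

definition full_matrix :: "nat \<Rightarrow> nat \<Rightarrow> nat" where
  "full_matrix i j = 1"

definition is_code :: "nat \<Rightarrow> (nat \<Rightarrow> nat \<Rightarrow> nat) \<Rightarrow> nat list set \<Rightarrow> bool" where
  "is_code N A C \<longleftrightarrow> C \<noteq> {} \<and> C \<subseteq> Bstar N A \<and>
     (\<forall>us vs. us \<in> lists C \<longrightarrow> vs \<in> lists C \<longrightarrow> concat us = concat vs \<longrightarrow> us = vs)"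

definition is_prefix_code :: "nat \<Rightarrow> (nat \<Rightarrow> nat \<Rightarrow> nat) \<Rightarrow> nat list set \<Rightarrow> bool" where
  "is_prefix_code N A C \<longleftrightarrow> is_code N A C \<and>
     (\<forall>u\<in>C. \<forall>v\<in>C. u \<noteq> v \<longrightarrow> \<not> (\<exists>z. v = u @ z))"

definition right_markov_code :: "nat \<Rightarrow> (nat \<Rightarrow> nat \<Rightarrow> nat) \<Rightarrow> nat list set \<Rightarrow> bool" where
  "right_markov_code N A C \<longleftrightarrow>
     finite C \<and> is_prefix_code N A C \<and>
     \<comment> \<open>(i)\<close>
     (\<forall>\<gamma>\<in>Bstar N A. \<exists>\<eta>\<in>Bstar N A. \<gamma> @ \<eta> \<in> Bstar N A \<and>
         (\<exists>!ws. ws \<in> lists C \<and> \<gamma> @ \<eta> = concat ws)) \<and>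
     \<comment> \<open>(ii)\<close>
     (\<exists>L::nat. L \<ge> 1 \<and> (\<forall>ws. ws \<in> lists C \<longrightarrow> length ws = L \<longrightarrow> concat ws \<in> Bstar N A \<longrightarrow>
         (\<exists>vs\<in>lists C. tl (hd ws) @ concat (tl ws) = concat vs))) \<and>
     \<comment> \<open>(iii)\<close>
     (\<forall>u\<in>C. \<forall>v\<in>C. \<exists>ns\<in>lists C. u @ concat ns @ v \<in> Bstar N A)"

end

theory Submission
  imports Defs
begin

text \<open>On the full shift every word is admissible. Let m be the maximal length of a
  code word; by condition (i) the word b^m is a prefix of a concatenation of code words,
  whose first word is therefore some b^j with j \<ge> 1. Condition (ii) applied to (b^j)^L
  writes b^(jL-1) as a concatenation of code words; each is a power of b and hence, by the
  prefix property, equal to b^j. So j divides jL - 1, i.e. j = 1: every letter is a code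
  word, and the prefix property excludes all longer words. Conversely the alphabet
  satisfies (i)--(iii) with \<eta> = [], L = 1 and no connecting words.\<close>

lemma Bstar_full_matrix:
  assumes "N \<ge> 1"
  shows "Bstar N full_matrix = {w. set w \<subseteq> {1..N}}"
proof (intro set_eqI iffI)
  fix w assume "w \<in> Bstar N full_matrix"
  then obtain x n where x: "x \<in> XA N full_matrix" and w: "w = map x [n..<n + length w]"
    unfolding Bstar_def by blast
  from x have "\<forall>k. x k \<in> {1..N}" unfolding XA_def by blast
  then show "w \<in> {w. set w \<subseteq> {1..N}}" by (subst w) auto
next
  fix w assume w: "w \<in> {w. set w \<subseteq> {1..N}}"
  define x where "x = (\<lambda>k. if k < length w then w ! k else 1)"
  have "x \<in> XA N full_matrix" using w assms
    unfolding XA_def full_matrix_def x_def by (auto simp: subset_iff)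
  moreover have "w = map x [0..<0 + length w]"
    by (rule nth_equalityI) (auto simp: x_def)
  ultimately show "w \<in> Bstar N full_matrix" unfolding Bstar_def by blast
qed

lemma code_Nil_notin:
  assumes "is_code N A C"
  shows "[] \<notin> C"
proof
  assume "[] \<in> C"
  then have "[[]] \<in> lists C" and "concat [[]] = concat ([] :: nat list list)" by auto
  then show False using assms unfolding is_code_def by blast
qed

lemma prefix_code_append_mem:
  assumes "is_prefix_code N A C" "u \<in> C" "u @ z \<in> C"
  shows "z = []"
  using assms unfolding is_prefix_code_def by force

lemma prefix_code_replicate_unique:
  assumes "is_prefix_code N A C" "replicate i b \<in> C" "replicate j b \<in> C"
  shows "i = j"
proof -
  have "i = j" if "i \<le> j" "replicate i b \<in> C" "replicate j b \<in> C" for i j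
  proof -
    have "replicate j b = replicate i b @ replicate (j - i) b"
      using \<open>i \<le> j\<close> by (simp add: replicate_add[symmetric])
    then have "replicate (j - i) b = []"
      using prefix_code_append_mem[OF assms(1) that(2)] that(3) by metis
    then show ?thesis using \<open>i \<le> j\<close> by simp
  qed
  then show ?thesis using assms(2,3) by (metis nat_le_linear)
qed

lemma concat_replicate_blocks_dvd:
  assumes "\<forall>v\<in>set vs. v = replicate j b" and "concat vs = replicate n b"
  shows "j dvd n"
proof -
  have "concat vs = replicate (j * length vs) b"
    using assms(1) by (induction vs) (auto simp: replicate_add)
  then have "n = j * length vs" using assms(2) by (metis length_replicate)
  then show ?thesis by simp
qed

lemma singleton_lists_eq_map_concat:
  "us \<in> lists (range (\<lambda>a. [a])) \<Longrightarrow> us = map (\<lambda>a. [a]) (concat us)"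
  by (induction us) auto

lemma right_markov_code_full_replicate_mem:
  assumes "N \<ge> 1" "right_markov_code N full_matrix C" "b \<in> {1..N}"
  obtains j where "j \<ge> 1" "replicate j b \<in> C"
proof -
  have "finite C" and code: "is_code N full_matrix C"
    using assms(2) unfolding right_markov_code_def is_prefix_code_def by auto
  then have "C \<noteq> {}" and Nil_notin: "[] \<notin> C"
    using code_Nil_notin unfolding is_code_def by auto
  define m where "m = Max (length ` C)"
  have length_le: "length u \<le> m" if "u \<in> C" for u
    using \<open>finite C\<close> that unfolding m_def by auto
  obtain u0 where "u0 \<in> C" using \<open>C \<noteq> {}\<close> by blast
  then have "m \<ge> 1"
    using Nil_notin length_le[of u0] by (cases u0) auto
  have "replicate m b \<in> Bstar N full_matrix"
    using Bstar_full_matrix[OF assms(1)] assms(3) by auto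
  then obtain \<eta> ws where ws: "ws \<in> lists C" "replicate m b @ \<eta> = concat ws"
    using assms(2) unfolding right_markov_code_def by blast
  then obtain u ws' where u: "ws = u # ws'"
    using \<open>m \<ge> 1\<close> by (cases ws) auto
  have "u \<in> C" using ws u by auto
  have "u = take (length u) (replicate m b @ \<eta>)" using ws(2) u by simp
  then have "u = replicate (length u) b" using length_le[OF \<open>u \<in> C\<close>] by simp
  moreover have "length u \<ge> 1" using \<open>u \<in> C\<close> Nil_notin by (cases u) auto
  ultimately show thesis using that \<open>u \<in> C\<close> by metis
qed

lemma right_markov_code_full_singleton_mem:
  assumes "N \<ge> 1" "right_markov_code N full_matrix C" "b \<in> {1..N}"
  shows "[b] \<in> C"
proof -
  obtain j where "j \<ge> 1" and bj: "replicate j b \<in> C"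
    using right_markov_code_full_replicate_mem[OF assms] .
  have prefix: "is_prefix_code N full_matrix C"
    using assms(2) unfolding right_markov_code_def by blast
  obtain L where "L \<ge> 1" and shift: "\<And>ws. ws \<in> lists C \<Longrightarrow> length ws = L \<Longrightarrow>
      concat ws \<in> Bstar N full_matrix \<Longrightarrow> \<exists>vs\<in>lists C. tl (hd ws) @ concat (tl ws) = concat vs"
    using assms(2) unfolding right_markov_code_def by blast
  define ws where "ws = replicate L (replicate j b)"
  have concat_ws: "concat ws = replicate (j * L) b"
    unfolding ws_def by (induction L) (auto simp: replicate_add)
  have "concat ws \<in> Bstar N full_matrix"
    unfolding concat_ws Bstar_full_matrix[OF assms(1)] using assms(3) by auto
  moreover have "ws \<in> lists C" and "length ws = L" using bj unfolding ws_def by auto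
  ultimately obtain vs where vs: "vs \<in> lists C" "tl (hd ws) @ concat (tl ws) = concat vs"
    using shift by blast
  have "tl (hd ws) @ concat (tl ws) = tl (concat ws)"
    using \<open>L \<ge> 1\<close> \<open>j \<ge> 1\<close> unfolding ws_def by (cases L; cases j) auto
  then have concat_vs: "concat vs = replicate (j * L - 1) b"
    using vs(2) concat_ws by simp
  have "v = replicate j b" if "v \<in> set vs" for v
  proof -
    have "set v \<subseteq> set (concat vs)" using that by auto
    then have "\<forall>y\<in>set v. y = b" unfolding concat_vs by auto
    then have v: "v = replicate (length v) b" by (simp add: replicate_length_same)
    moreover have "v \<in> C" using that vs(1) by auto
    ultimately have "length v = j" using prefix_code_replicate_unique[OF prefix _ bj] by metis
    then show ?thesis using v by simp
  qed
  then have "j dvd j * L - 1"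
    using concat_vs by (intro concat_replicate_blocks_dvd) auto
  moreover have "j * L - (j * L - 1) = 1"
    using \<open>j \<ge> 1\<close> \<open>L \<ge> 1\<close> by (simp add: Suc_leI)
  ultimately have "j dvd 1"
    using dvd_diff_nat[of j "j * L" "j * L - 1"] by simp
  then show ?thesis using bj by simp
qed

lemma right_markov_code_full_imp_alphabet:
  assumes "N \<ge> 1" "right_markov_code N full_matrix C"
  shows "C = {[a] | a. a \<in> {1..N}}"
proof (intro set_eqI iffI)
  fix w assume "w \<in> C"
  have code: "is_code N full_matrix C" and prefix: "is_prefix_code N full_matrix C"
    using assms(2) unfolding right_markov_code_def is_prefix_code_def by auto
  then obtain a t where w: "w = a # t" using \<open>w \<in> C\<close> code_Nil_notin by (cases w) auto
  have "a \<in> {1..N}"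
    using \<open>w \<in> C\<close> code Bstar_full_matrix[OF assms(1)] unfolding is_code_def w by auto
  moreover have "t = []"
    using prefix_code_append_mem[OF prefix right_markov_code_full_singleton_mem[OF assms \<open>a \<in> _\<close>]]
      \<open>w \<in> C\<close> w by simp
  ultimately show "w \<in> {[a] | a. a \<in> {1..N}}" using w by blast
next
  fix w assume "w \<in> {[a] | a. a \<in> {1..N}}"
  then show "w \<in> C" using right_markov_code_full_singleton_mem[OF assms] by blast
qed

lemma right_markov_code_full_alphabet:
  assumes "N \<ge> 1"
  shows "right_markov_code N full_matrix {[a] | a. a \<in> {1..N}}"
    (is "right_markov_code N full_matrix ?C")
proof -
  note Bstar = Bstar_full_matrix[OF assms]
  have parse_unique: "us = vs" if "us \<in> lists ?C" "vs \<in> lists ?C" "concat us = concat vs" for us vs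
  proof -
    have "lists ?C \<subseteq> lists (range (\<lambda>a. [a]))" by (rule lists_mono) blast
    then have "us \<in> lists (range (\<lambda>a. [a]))" and "vs \<in> lists (range (\<lambda>a. [a]))"
      using that(1,2) by blast+
    then show ?thesis
      using that(3) singleton_lists_eq_map_concat by metis
  qed
  have "finite ?C" by (simp add: setcompr_eq_image)
  moreover have "is_prefix_code N full_matrix ?C"
    using assms parse_unique unfolding is_prefix_code_def is_code_def Bstar by auto
  moreover have "\<exists>\<eta>\<in>Bstar N full_matrix. \<gamma> @ \<eta> \<in> Bstar N full_matrix \<and>
      (\<exists>!ws. ws \<in> lists ?C \<and> \<gamma> @ \<eta> = concat ws)" if "\<gamma> \<in> Bstar N full_matrix" for \<gamma>
  proof (intro bexI[of _ "[]"] conjI)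
    let ?ws = "map (\<lambda>a. [a]) \<gamma>"
    have parse: "?ws \<in> lists ?C \<and> \<gamma> @ [] = concat ?ws"
      using that unfolding Bstar by (auto simp: subset_iff)
    show "\<exists>!ws. ws \<in> lists ?C \<and> \<gamma> @ [] = concat ws"
    proof (rule ex1I[of _ ?ws])
      fix ws assume "ws \<in> lists ?C \<and> \<gamma> @ [] = concat ws"
      with parse show "ws = ?ws" by (intro parse_unique) auto
    qed (fact parse)
  qed (use that Bstar in auto)
  moreover have "\<exists>L::nat. L \<ge> 1 \<and> (\<forall>ws. ws \<in> lists ?C \<longrightarrow> length ws = L \<longrightarrow>
      concat ws \<in> Bstar N full_matrix \<longrightarrow> (\<exists>vs\<in>lists ?C. tl (hd ws) @ concat (tl ws) = concat vs))"
  proof (intro exI[of _ 1] conjI allI impI)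
    fix ws assume "ws \<in> lists ?C" "length ws = 1"
    then have "tl (hd ws) @ concat (tl ws) = concat []" by (cases ws) auto
    then show "\<exists>vs\<in>lists ?C. tl (hd ws) @ concat (tl ws) = concat vs" by blast
  qed simp
  moreover have "\<forall>u\<in>?C. \<forall>v\<in>?C. \<exists>ns\<in>lists ?C. u @ concat ns @ v \<in> Bstar N full_matrix"
    unfolding Bstar by (auto intro: bexI[of _ "[]"])
  ultimately show ?thesis
    unfolding right_markov_code_def by blast
qed

theorem mainTheorem3:
  fixes N :: nat and C :: "nat list set"
  assumes "N \<ge> 1"
  shows "right_markov_code N full_matrix C \<longleftrightarrow> C = {[a] | a. a \<in> {1..N}}"
  using right_markov_code_full_imp_alphabet[OF assms] right_markov_code_full_alphabet[OF assms]
  by blast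

end
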